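(* Let $X=(\vec x_i)_{i\ge1}$ be the infinite sequence in $[0,1]^2$ defined as follows: for each integer $\ell\ge2$ let $n_\ell:=\ell\lceil\ln^2\ell\rceil+1$ and $\theta_\ell:=\frac{\pi}{2(n_\ell-1)}$; for $0\le j\le n_\ell-1$ let $\vec x_{\ell,j}:=(\cos(j\theta_\ell),\sin(j\theta_\ell))$ if $\ell$ is even and $\vec x_{\ell,j}:=(\sin(j\theta_\ell),\cos(j\theta_\ell))$ if $\ell$ is odd; the sequence lists all $\vec x_{\ell,j}$ lexicographically in $(\ell,j)$. Then \[\sup_{(c_i)_{i\ge1}\,:\,c_i\in[0,\sqrt2]}\ \sum_{i\ge1} c_i\,\vec x_i\cdot(\vec x_i-\vec x_{i+1}) \;=\;\sqrt2\sum_{i\ge1}\bigl(1-\vec x_i\cdot\vec x_{i+1}\bigr)\;\le\;6.\] *)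

theory Defs
  imports "HOL-Analysis.Analysis"
begin

definition blk_n :: "nat \<Rightarrow> nat" where
  "blk_n l = l * nat \<lceil>(ln (real l))\<^sup>2\<rceil> + 1"

definition blk_theta :: "nat \<Rightarrow> real" where
  "blk_theta l = pi / (2 * (real (blk_n l) - 1))"

definition blk_point :: "nat \<Rightarrow> nat \<Rightarrow> real \<times> real" where
  "blk_point l j =
     (if even l then (cos (real j * blk_theta l), sin (real j * blk_theta l))
      else (sin (real j * blk_theta l), cos (real j * blk_theta l)))"

definition blk_start :: "nat \<Rightarrow> nat" where
  "blk_start l = (\<Sum>k\<in>{2..<l}. blk_n k)"

text \<open>The sequence X, indexed from 1: the i-th point (i \<ge> 1) is x_{l,j} where
  the (i-1)-th position (counting from 0) lies in block l at offset j,
  blocks listed lexicographically in (l,j).  The value at index 0 is irrelevant.\<close>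
definition Xseq :: "nat \<Rightarrow> real \<times> real" where
  "Xseq i =
     (let l = (LEAST l. 2 \<le> l \<and> i - 1 < blk_start (Suc l))
      in blk_point l (i - 1 - blk_start l))"

end

theory Submission
  imports Defs
begin

text \<open>All points are unit vectors, so with weights in \<open>[0, \<surd>2]\<close> every term of the weighted
  series is a nonnegative multiple of \<open>1 - x\<^sub>i \<bullet> x\<^sub>i\<^sub>+\<^sub>1\<close> and the supremum is attained by the
  constant weight \<open>\<surd>2\<close>. Inside block \<open>l\<close> consecutive points are at angle \<open>\<theta>\<^sub>l\<close>, and the last
  point of a block coincides with the first point of the next one, so block \<open>l\<close> contributes
  \<open>(n\<^sub>l - 1)(1 - cos \<theta>\<^sub>l) \<le> (n\<^sub>l - 1) \<theta>\<^sub>l\<^sup>2 / 2 = \<pi>\<^sup>2 / (8 (n\<^sub>l - 1)) \<le> \<pi>\<^sup>2 / (8 l ln\<^sup>2 l)\<close>.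
  These bounds telescope against \<open>1 / ln l\<close>, giving the total \<open>\<pi>\<^sup>2/16 + \<pi>\<^sup>2/(8 ln 2) \<le> 4\<close>.\<close>

lemma one_minus_cos_le: "1 - cos x \<le> x\<^sup>2 / 2" for x :: real
proof -
  have "1 - cos x = 2 * (sin (x / 2))\<^sup>2"
    using cos_double_sin[of "x / 2"] by simp
  moreover have "(sin (x / 2))\<^sup>2 \<le> (x / 2)\<^sup>2"
    using abs_sin_x_le_abs_x[of "x / 2"] by (metis abs_ge_zero power2_abs power_mono)
  ultimately show ?thesis
    by (simp add: power_divide)
qed

lemma inverse_mult_ln_square_le:
  fixes x :: real
  assumes "2 < x"
  shows "1 / (x * (ln x)\<^sup>2) \<le> 1 / ln (x - 1) - 1 / ln x"
proof -
  define a b where "a = ln (x - 1)" and "b = ln x"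
  have a: "0 < a" and ab: "a \<le> b"
    using assms by (simp_all add: a_def b_def)
  have "a - b \<le> - 1 / x"
    using ln_diff_le[of "x - 1" x] assms by (simp add: a_def b_def)
  then have "1 / x \<le> b - a"
    by simp
  then have "1 / (x * b\<^sup>2) \<le> (b - a) / (b * b)"
    using a ab by (simp add: power2_eq_square divide_right_mono flip: divide_divide_eq_left)
  also have "\<dots> \<le> (b - a) / (a * b)"
    using a ab by (intro divide_left_mono mult_right_mono) auto
  also have "\<dots> = 1 / a - 1 / b"
    using a ab by (simp add: field_simps)
  finally show ?thesis
    by (simp add: a_def b_def)
qed

lemma sum_inverse_mult_ln_square_le_telescope:
  "3 \<le> L \<Longrightarrow>
    (\<Sum>l\<in>{3..<L}. 1 / (real l * (ln (real l))\<^sup>2)) \<le> 1 / ln 2 - 1 / ln (real L - 1)"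
proof (induction L rule: dec_induct)
  case base
  then show ?case by simp
next
  case (step L)
  then show ?case
    using inverse_mult_ln_square_le[of "real L"] by (simp add: sum.atLeastLessThan_Suc)
qed

lemma sum_inverse_mult_ln_square_le:
  "(\<Sum>l\<in>{3..<L}. 1 / (real l * (ln (real l))\<^sup>2)) \<le> 1 / ln 2"
proof (cases "3 \<le> L")
  case True
  have "0 \<le> 1 / ln (real L - 1)"
    using True by simp
  with sum_inverse_mult_ln_square_le_telescope[OF True] show ?thesis
    by linarith
qed simp

lemma sum_lessThan_add: "(\<Sum>k<m + n. f k) = (\<Sum>k<m. f k) + (\<Sum>j<n. f (m + j))"
  for f :: "nat \<Rightarrow> 'a::comm_monoid_add"
  by (induction n) (simp_all add: add.assoc)

lemma SUP_bounded_weights_suminf: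
  fixes a :: "nat \<Rightarrow> real"
  assumes a: "summable a" "\<And>k. 0 \<le> a k" and M: "0 \<le> M"
  shows "(SUP c\<in>{c. \<forall>i\<ge>1. c i \<in> {0..M}}. \<Sum>k. c (Suc k) * a k) = M * suminf a"
proof (rule cSup_eq_maximum)
  show "M * suminf a \<in> (\<lambda>c. \<Sum>k. c (Suc k) * a k) ` {c. \<forall>i\<ge>1. c i \<in> {0..M}}"
    using M suminf_mult[OF a(1), of M] by (intro image_eqI[of _ _ "\<lambda>_. M"]) auto
next
  fix y
  assume "y \<in> (\<lambda>c. \<Sum>k. c (Suc k) * a k) ` {c. \<forall>i\<ge>1. c i \<in> {0..M}}"
  then obtain c where "\<forall>i\<ge>1. c i \<in> {0..M}" and y: "y = (\<Sum>k. c (Suc k) * a k)"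
    by blast
  then have c: "0 \<le> c (Suc k) \<and> c (Suc k) \<le> M" for k
    by simp
  have le: "c (Suc k) * a k \<le> M * a k" for k
    using c a(2) by (intro mult_right_mono) auto
  have M_summable: "summable (\<lambda>k. M * a k)"
    using a(1) by (rule summable_mult)
  have c_summable: "summable (\<lambda>k. c (Suc k) * a k)"
    using c a(2) le by (intro summable_comparison_test'[OF M_summable]) auto
  have "y \<le> (\<Sum>k. M * a k)"
    unfolding y by (rule suminf_le[OF le c_summable M_summable])
  then show "y \<le> M * suminf a"
    using suminf_mult[OF a(1), of M] by simp
qed

lemma one_le_nat_ceiling_ln_square: "2 \<le> l \<Longrightarrow> 1 \<le> nat \<lceil>(ln (real l))\<^sup>2\<rceil>"
proof -
  assume "2 \<le> l"
  then have "0 < (ln (real l))\<^sup>2"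
    by simp
  then have "1 \<le> \<lceil>(ln (real l))\<^sup>2\<rceil>"
    by (meson ceiling_less_one not_le)
  then show ?thesis
    by linarith
qed

lemma two_le_blk_n: "2 \<le> l \<Longrightarrow> 2 \<le> blk_n l"
  using one_le_nat_ceiling_ln_square[of l] mult_le_mono[of 2 l 1] by (simp add: blk_n_def)

lemma blk_n_minus_one_ge:
  assumes "2 \<le> l"
  shows "real l \<le> real (blk_n l) - 1" and "real l * (ln (real l))\<^sup>2 \<le> real (blk_n l) - 1"
proof -
  have n: "real (blk_n l) - 1 = real l * real (nat \<lceil>(ln (real l))\<^sup>2\<rceil>)"
    by (simp add: blk_n_def)
  have "1 \<le> real (nat \<lceil>(ln (real l))\<^sup>2\<rceil>)"
    using one_le_nat_ceiling_ln_square[OF assms] by (metis of_nat_1 of_nat_le_iff)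
  then have "real l * 1 \<le> real l * real (nat \<lceil>(ln (real l))\<^sup>2\<rceil>)"
    by (rule mult_left_mono) simp
  then show "real l \<le> real (blk_n l) - 1"
    unfolding n by simp
  have "(ln (real l))\<^sup>2 \<le> real (nat \<lceil>(ln (real l))\<^sup>2\<rceil>)"
    by (simp add: le_of_int_ceiling)
  then show "real l * (ln (real l))\<^sup>2 \<le> real (blk_n l) - 1"
    unfolding n by (rule mult_left_mono) simp
qed

lemma blk_n_minus_one_mult_blk_theta: "2 \<le> l \<Longrightarrow> (real (blk_n l) - 1) * blk_theta l = pi / 2"
  using two_le_blk_n[of l] by (simp add: blk_theta_def field_simps)

lemma blk_start_Suc: "2 \<le> l \<Longrightarrow> blk_start (Suc l) = blk_start l + blk_n l"
  by (simp add: blk_start_def sum.atLeastLessThan_Suc)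

lemma blk_start_mono: "l \<le> l' \<Longrightarrow> blk_start l \<le> blk_start l'"
  unfolding blk_start_def by (rule sum_mono2) auto

lemma blk_start_Suc_ge: "l - 1 \<le> blk_start (Suc l)"
proof -
  have "of_nat (card {2..<Suc l}) * 1 \<le> blk_start (Suc l)"
    unfolding blk_start_def by (rule sum_bounded_below) (use two_le_blk_n in fastforce)
  then show ?thesis
    by simp
qed

lemma Xseq_blk_start_add:
  assumes l: "2 \<le> l" and j: "j < blk_n l"
  shows "Xseq (Suc (blk_start l + j)) = blk_point l j"
proof -
  have "(LEAST l'. 2 \<le> l' \<and> blk_start l + j < blk_start (Suc l')) = l"
  proof (rule Least_equality)
    show "2 \<le> l \<and> blk_start l + j < blk_start (Suc l)"
      using l j by (simp add: blk_start_Suc)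
    show "l \<le> l'" if "2 \<le> l' \<and> blk_start l + j < blk_start (Suc l')" for l'
      using that blk_start_mono[of "Suc l'" l] by linarith
  qed
  then show ?thesis
    by (simp add: Xseq_def Let_def)
qed

lemma ex_blk_start_add: "\<exists>l j. 2 \<le> l \<and> j < blk_n l \<and> k = blk_start l + j"
proof -
  define P where "P l \<longleftrightarrow> 2 \<le> l \<and> k < blk_start (Suc l)" for l
  define l where "l = (LEAST l. P l)"
  have "P (k + 2)"
    using blk_start_Suc_ge[of "k + 2"] by (simp add: P_def)
  then have Pl: "P l"
    unfolding l_def by (rule LeastI)
  have "blk_start l \<le> k"
  proof (cases "l = 2")
    case False
    with Pl have "l - 1 < l"
      by (simp add: P_def)
    then have "\<not> P (l - 1)"
      unfolding l_def by (rule not_less_Least)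
    with Pl False show ?thesis
      by (auto simp: P_def not_less)
  qed (simp add: blk_start_def)
  with Pl show ?thesis
    by (intro exI[of _ l] exI[of _ "k - blk_start l"]) (auto simp: P_def blk_start_Suc)
qed

lemma blk_point_inner: "blk_point l i \<bullet> blk_point l j = cos ((real j - real i) * blk_theta l)"
  by (simp add: blk_point_def cos_diff left_diff_distrib algebra_simps)

text \<open>Block \<open>l\<close> ends at angle \<open>\<pi>/2\<close>; the reflection \<open>(x, y) \<mapsto> (y, x)\<close> alternating with the
  parity of \<open>l\<close> makes this the starting point of block \<open>l + 1\<close>.\<close>
lemma blk_point_last:
  assumes "2 \<le> l"
  shows "blk_point l (blk_n l - 1) = blk_point (Suc l) 0"
proof -
  have last_angle: "real (blk_n l - 1) * blk_theta l = pi / 2"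
    using blk_n_minus_one_mult_blk_theta[OF assms] two_le_blk_n[OF assms] by (simp add: of_nat_diff)
  show ?thesis
    unfolding blk_point_def last_angle by simp
qed

lemma Xseq_inner_self: "Xseq (Suc k) \<bullet> Xseq (Suc k) = 1"
  using ex_blk_start_add[of k] Xseq_blk_start_add blk_point_inner by force

definition Xgap :: "nat \<Rightarrow> real" where
  "Xgap k = 1 - Xseq (Suc k) \<bullet> Xseq (Suc (Suc k))"

lemma Xgap_blk_start_add:
  assumes l: "2 \<le> l" and j: "j < blk_n l"
  shows "Xgap (blk_start l + j) = (if j + 1 < blk_n l then 1 - cos (blk_theta l) else 0)"
proof (cases "j + 1 < blk_n l")
  case True
  then show ?thesis
    using Xseq_blk_start_add[OF l j] Xseq_blk_start_add[OF l True]
    by (simp add: Xgap_def blk_point_inner)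
next
  case False
  then have "j = blk_n l - 1"
    using j by simp
  moreover have "Suc (Suc (blk_start l + j)) = Suc (blk_start (Suc l) + 0)"
    using False j l by (simp add: blk_start_Suc)
  then have "Xseq (Suc (Suc (blk_start l + j))) = blk_point (Suc l) 0"
    using Xseq_blk_start_add[of "Suc l" 0] l two_le_blk_n[of "Suc l"] by simp
  ultimately show ?thesis
    using Xseq_blk_start_add[OF l j] blk_point_last[OF l] blk_point_inner[of "Suc l" 0 0]
    by (simp add: Xgap_def)
qed

lemma Xgap_nonneg: "0 \<le> Xgap k"
  using ex_blk_start_add[of k] Xgap_blk_start_add by force

definition blk_cost :: "nat \<Rightarrow> real" where
  "blk_cost l = (real (blk_n l) - 1) * (1 - cos (blk_theta l))"

lemma sum_Xgap_blk: "2 \<le> l \<Longrightarrow> (\<Sum>j<blk_n l. Xgap (blk_start l + j)) = blk_cost l"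
proof -
  assume l: "2 \<le> l"
  then obtain m where m: "blk_n l = Suc m"
    using two_le_blk_n[OF l] by (cases "blk_n l") auto
  have "(\<Sum>j<blk_n l. Xgap (blk_start l + j)) = (\<Sum>j<Suc m. if j < m then 1 - cos (blk_theta l) else 0)"
    using Xgap_blk_start_add[OF l] m by (intro sum.cong) auto
  then show ?thesis
    by (simp add: blk_cost_def m)
qed

lemma sum_Xgap_blk_start: "2 \<le> L \<Longrightarrow> (\<Sum>k<blk_start L. Xgap k) = (\<Sum>l\<in>{2..<L}. blk_cost l)"
proof (induction L rule: dec_induct)
  case base
  then show ?case by (simp add: blk_start_def)
next
  case (step L)
  then show ?case
    by (simp add: blk_start_Suc sum_lessThan_add sum_Xgap_blk sum.atLeastLessThan_Suc)
qed

lemma blk_cost_le: "2 \<le> l \<Longrightarrow> blk_cost l \<le> pi\<^sup>2 / (8 * (real (blk_n l) - 1))"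
proof -
  assume l: "2 \<le> l"
  define N where "N = real (blk_n l) - 1"
  have N: "0 < N"
    using two_le_blk_n[OF l] by (simp add: N_def)
  have "blk_cost l \<le> N * ((pi / (2 * N))\<^sup>2 / 2)"
    using N one_minus_cos_le[of "blk_theta l"]
    by (simp add: blk_cost_def blk_theta_def N_def[symmetric] mult_left_mono)
  also have "\<dots> = pi\<^sup>2 / (8 * N)"
    using N by (simp add: field_simps power2_eq_square)
  finally show ?thesis
    by (simp add: N_def)
qed

lemma blk_cost_nonneg: "0 \<le> blk_cost l"
proof -
  have "1 \<le> blk_n l"
    by (simp add: blk_n_def)
  then show ?thesis
    by (simp add: blk_cost_def)
qed

lemma blk_cost_le_inverse_mult_ln_square:
  assumes "3 \<le> l"
  shows "blk_cost l \<le> pi\<^sup>2 / 8 * (1 / (real l * (ln (real l))\<^sup>2))"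
proof -
  have "0 < real l * (ln (real l))\<^sup>2"
    using assms by simp
  moreover have "real l * (ln (real l))\<^sup>2 \<le> real (blk_n l) - 1"
    using blk_n_minus_one_ge(2)[of l] assms by simp
  ultimately have "pi\<^sup>2 / (8 * (real (blk_n l) - 1)) \<le> pi\<^sup>2 / (8 * (real l * (ln (real l))\<^sup>2))"
    using assms by (intro divide_left_mono mult_pos_pos; (linarith | simp))
  with blk_cost_le[of l] assms show ?thesis
    by simp
qed

lemma sum_blk_cost_le: "(\<Sum>l\<in>{2..<L}. blk_cost l) \<le> pi\<^sup>2 / 16 + pi\<^sup>2 / (8 * ln 2)"
proof -
  have "pi\<^sup>2 / (8 * (real (blk_n 2) - 1)) \<le> pi\<^sup>2 / (8 * 2)"
    using blk_n_minus_one_ge(1)[of 2] by (intro divide_left_mono) auto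
  with blk_cost_le[of 2] have "blk_cost 2 \<le> pi\<^sup>2 / (8 * 2)"
    by linarith
  have "(\<Sum>l\<in>{3..<max 3 L}. blk_cost l) \<le> pi\<^sup>2 / 8 * (\<Sum>l\<in>{3..<max 3 L}. 1 / (real l * (ln (real l))\<^sup>2))"
    unfolding sum_distrib_left using blk_cost_le_inverse_mult_ln_square by (intro sum_mono) auto
  also have "\<dots> \<le> pi\<^sup>2 / 8 * (1 / ln 2)"
    using sum_inverse_mult_ln_square_le[of "max 3 L"] by (rule mult_left_mono) simp
  finally have "(\<Sum>l\<in>{2..<max 3 L}. blk_cost l) \<le> pi\<^sup>2 / 16 + pi\<^sup>2 / (8 * ln 2)"
    using \<open>blk_cost 2 \<le> pi\<^sup>2 / (8 * 2)\<close> by (simp add: sum.atLeast_Suc_lessThan)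
  moreover have "(\<Sum>l\<in>{2..<L}. blk_cost l) \<le> (\<Sum>l\<in>{2..<max 3 L}. blk_cost l)"
    using blk_cost_nonneg by (intro sum_mono2) auto
  ultimately show ?thesis
    by linarith
qed

lemma sum_Xgap_le: "(\<Sum>k<N. Xgap k) \<le> pi\<^sup>2 / 16 + pi\<^sup>2 / (8 * ln 2)"
proof -
  have "(\<Sum>k<N. Xgap k) \<le> (\<Sum>k<blk_start (N + 2). Xgap k)"
    using blk_start_Suc_ge[of "N + 1"] Xgap_nonneg by (intro sum_mono2) auto
  also have "\<dots> = (\<Sum>l\<in>{2..<N + 2}. blk_cost l)"
    by (simp add: sum_Xgap_blk_start)
  finally show ?thesis
    using sum_blk_cost_le by (rule order_trans)
qed

lemma sqrt2_mult_bound_le_6: "sqrt 2 * (pi\<^sup>2 / 16 + pi\<^sup>2 / (8 * ln 2)) \<le> 6"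
proof -
  have "pi\<^sup>2 \<le> 4\<^sup>2"
    using pi_less_4 by (intro power_mono) auto
  then have "pi\<^sup>2 / 16 + pi\<^sup>2 / (8 * ln 2) \<le> 16 / 16 + 16 / (8 * (2 / 3))"
    using ln2_ge_two_thirds by (intro add_mono frac_le) auto
  moreover have "sqrt 2 \<le> 3 / 2"
    by (rule real_le_lsqrt) (auto simp: power2_eq_square)
  ultimately have "sqrt 2 * (pi\<^sup>2 / 16 + pi\<^sup>2 / (8 * ln 2)) \<le> 3 / 2 * 4"
    by (intro mult_mono) auto
  then show ?thesis
    by simp
qed

theorem proposition5p6:
  shows "summable (\<lambda>k. 1 - Xseq (Suc k) \<bullet> Xseq (Suc (Suc k)))
    \<and> (SUP c\<in>{c :: nat \<Rightarrow> real. \<forall>i\<ge>1. c i \<in> {0..sqrt 2}}.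
          (\<Sum>k. c (Suc k) * (Xseq (Suc k) \<bullet> (Xseq (Suc k) - Xseq (Suc (Suc k))))))
        = sqrt 2 * (\<Sum>k. 1 - Xseq (Suc k) \<bullet> Xseq (Suc (Suc k)))
    \<and> sqrt 2 * (\<Sum>k. 1 - Xseq (Suc k) \<bullet> Xseq (Suc (Suc k))) \<le> 6"
proof -
  have weighted_term: "Xseq (Suc k) \<bullet> (Xseq (Suc k) - Xseq (Suc (Suc k))) = Xgap k" for k
    by (simp add: Xgap_def inner_diff_right Xseq_inner_self)
  have summable: "summable Xgap"
    using Xgap_nonneg sum_Xgap_le by (rule summableI_nonneg_bounded)
  have "sqrt 2 * suminf Xgap \<le> sqrt 2 * (pi\<^sup>2 / 16 + pi\<^sup>2 / (8 * ln 2))"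
    using suminf_le_const[OF summable sum_Xgap_le] by (simp add: mult_left_mono)
  with sqrt2_mult_bound_le_6 have "sqrt 2 * suminf Xgap \<le> 6"
    by linarith
  then show ?thesis
    using summable SUP_bounded_weights_suminf[OF summable Xgap_nonneg, of "sqrt 2"]
    by (simp add: weighted_term Xgap_def[abs_def])
qed

end
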